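(* Let $n\ge 2$ and let $P_n$ be the path on $n$ vertices. There exist pairs of vertices $\{a,b\}\neq\{c,d\}$ of $P_n$, at least one of which is an edge, such that there is perfect pair state transfer between $e_a-e_b$ and $e_c-e_d$ in $P_n$, if and only if $n\in\{3,4\}$.
   Context: For a graph with Laplacian $L=\Delta-A$ ($\Delta$ degree matrix, $A$ adjacency matrix), $U(t)=\exp(itL)$. Perfect pair state transfer between $e_a-e_b$ and $e_c-e_d$ means there exist $t\ge0$ and $\gamma\in\mathbb{C}$ with $|\gamma|=1$ such that $U(t)(e_a-e_b)=\gamma(e_c-e_d)$, $e_v$ being the standard basis vector of $v$. *)

theory Defs
  imports Complex_Main
begin

text \<open>Square complex matrices of size n are represented as functions
  nat \<Rightarrow> nat \<Rightarrow> complex, only entries with indices < n being meaningful;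
  vectors as nat \<Rightarrow> complex (entries with index < n meaningful).\<close>

definition mat_mult :: "nat \<Rightarrow> (nat \<Rightarrow> nat \<Rightarrow> complex) \<Rightarrow> (nat \<Rightarrow> nat \<Rightarrow> complex) \<Rightarrow> (nat \<Rightarrow> nat \<Rightarrow> complex)" where
  "mat_mult n M N = (\<lambda>i j. \<Sum>k<n. M i k * N k j)"

definition mat_id :: "nat \<Rightarrow> nat \<Rightarrow> complex" where
  "mat_id = (\<lambda>i j. if i = j then 1 else 0)"

fun mat_pow :: "nat \<Rightarrow> (nat \<Rightarrow> nat \<Rightarrow> complex) \<Rightarrow> nat \<Rightarrow> (nat \<Rightarrow> nat \<Rightarrow> complex)" where
  "mat_pow n M 0 = mat_id"
| "mat_pow n M (Suc k) = mat_mult n M (mat_pow n M k)"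

definition mat_exp :: "nat \<Rightarrow> (nat \<Rightarrow> nat \<Rightarrow> complex) \<Rightarrow> (nat \<Rightarrow> nat \<Rightarrow> complex)" where
  "mat_exp n M = (\<lambda>i j. \<Sum>k. mat_pow n M k i j / of_nat (fact k))"

definition mat_vec :: "nat \<Rightarrow> (nat \<Rightarrow> nat \<Rightarrow> complex) \<Rightarrow> (nat \<Rightarrow> complex) \<Rightarrow> (nat \<Rightarrow> complex)" where
  "mat_vec n M x = (\<lambda>i. \<Sum>j<n. M i j * x j)"

text \<open>Graph on vertices {0..<n} given by a symmetric irreflexive adjacency relation.\<close>
definition adj_mat :: "(nat \<Rightarrow> nat \<Rightarrow> bool) \<Rightarrow> nat \<Rightarrow> nat \<Rightarrow> complex" where
  "adj_mat E = (\<lambda>i j. if E i j then 1 else 0)"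

definition degree :: "nat \<Rightarrow> (nat \<Rightarrow> nat \<Rightarrow> bool) \<Rightarrow> nat \<Rightarrow> nat" where
  "degree n E v = card {w. w < n \<and> E v w}"

definition deg_mat :: "nat \<Rightarrow> (nat \<Rightarrow> nat \<Rightarrow> bool) \<Rightarrow> nat \<Rightarrow> nat \<Rightarrow> complex" where
  "deg_mat n E = (\<lambda>i j. if i = j then of_nat (degree n E i) else 0)"

definition laplacian :: "nat \<Rightarrow> (nat \<Rightarrow> nat \<Rightarrow> bool) \<Rightarrow> nat \<Rightarrow> nat \<Rightarrow> complex" where
  "laplacian n E = (\<lambda>i j. deg_mat n E i j - adj_mat E i j)"

definition transition :: "nat \<Rightarrow> (nat \<Rightarrow> nat \<Rightarrow> bool) \<Rightarrow> real \<Rightarrow> nat \<Rightarrow> nat \<Rightarrow> complex" where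
  "transition n E t = mat_exp n (\<lambda>i j. \<i> * of_real t * laplacian n E i j)"

definition std_basis :: "nat \<Rightarrow> nat \<Rightarrow> complex" where
  "std_basis v = (\<lambda>i. if i = v then 1 else 0)"

definition pair_PST :: "nat \<Rightarrow> (nat \<Rightarrow> nat \<Rightarrow> bool) \<Rightarrow> nat \<Rightarrow> nat \<Rightarrow> nat \<Rightarrow> nat \<Rightarrow> bool" where
  "pair_PST n E a b c d \<longleftrightarrow>
     (\<exists>t::real. \<exists>\<gamma>::complex. t \<ge> 0 \<and> cmod \<gamma> = 1 \<and>
        (\<forall>i<n. mat_vec n (transition n E t) (\<lambda>v. std_basis a v - std_basis b v) i
               = \<gamma> * (std_basis c i - std_basis d i)))"

definition path_adj :: "nat \<Rightarrow> nat \<Rightarrow> bool" where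
  "path_adj i j \<longleftrightarrow> i = Suc j \<or> j = Suc i"

end

theory Submission
  imports Defs
begin

text \<open>The Laplacian of \<open>P\<^sub>n\<close> has the eigenvectors \<open>v\<^sub>k(j) = cos (k(2j+1)\<pi>/2n)\<close> with
  eigenvalues \<open>\<theta>\<^sub>k = 2 - 2 cos (k\<pi>/n)\<close>. Pairing \<open>U(t)(e\<^sub>a - e\<^sub>b) = \<gamma>(e\<^sub>c - e\<^sub>d)\<close> with
  \<open>v\<^sub>k\<close> gives \<open>exp (i t \<theta>\<^sub>k) (v\<^sub>k(a) - v\<^sub>k(b)) = \<gamma> (v\<^sub>k(c) - v\<^sub>k(d))\<close> for every \<open>k\<close>.
  So both pairs have coefficients of equal modulus and, as \<open>t \<noteq> 0\<close>, all differences
  \<open>cos (j\<pi>/n) - cos (k\<pi>/n)\<close> with \<open>j, k\<close> in the support of \<open>e\<^sub>a - e\<^sub>b\<close> are integer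
  multiples of \<open>\<pi>/2t\<close>.

  For an edge \<open>{m - 1, m}\<close> the support consists of the \<open>k\<close> such that neither \<open>n\<close> divides
  \<open>km\<close> nor \<open>2n\<close> divides \<open>k\<close>. For \<open>n \<ge> 5\<close> it usually contains a progression
  \<open>p, p + h, p + 2h, p + 3h\<close> with \<open>3h < n\<close>; then \<open>cos \<alpha> + cos (\<alpha> + 2\<beta>) = 2 cos \<beta> cos (\<alpha> + \<beta>)\<close>
  makes \<open>2 cos (h\<pi>/n)\<close> rational, contradicting Niven's theorem. The exceptions
  \<open>n \<in> {6, 8, 9, 12}\<close> fall to multiple-angle formulas, except the middle edge of \<open>P\<^sub>6\<close>,
  which the coefficient moduli separate from all other pairs. For \<open>n = 3, 4\<close>, expanding
  \<open>e\<^sub>0 - e\<^sub>1\<close> in eigenvectors exhibits transfer to \<open>e\<^sub>1 - e\<^sub>2\<close> at \<open>t = \<pi>/2\<close>, resp. to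
  \<open>e\<^sub>2 - e\<^sub>3\<close> at \<open>t = \<pi>/\<surd>2\<close>.\<close>

section \<open>Matrix exponential\<close>

lemma norm_mat_pow_le:
  assumes M: "\<And>i j. cmod (M i j) \<le> B" and B: "0 \<le> B"
  shows "cmod (mat_pow n M k i j) \<le> (real n * B) ^ k"
proof (induction k arbitrary: i j)
  case 0
  then show ?case by (simp add: mat_id_def)
next
  case (Suc k)
  have "cmod (mat_pow n M (Suc k) i j) \<le> (\<Sum>l<n. cmod (M i l * mat_pow n M k l j))"
    unfolding mat_pow.simps mat_mult_def by (rule norm_sum)
  also have "\<dots> \<le> (\<Sum>l<n. B * (real n * B) ^ k)"
    by (rule sum_mono) (simp add: norm_mult mult_mono M B Suc.IH)
  finally show ?case by simp
qed

lemma mat_exp_series_sums: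
  assumes "\<And>i j. cmod (M i j) \<le> B" "0 \<le> B"
  shows "(\<lambda>k. mat_pow n M k i j / of_nat (fact k)) sums mat_exp n M i j"
proof -
  have "summable (\<lambda>k. mat_pow n M k i j / of_nat (fact k))"
  proof (rule summable_comparison_test)
    show "\<exists>N. \<forall>k\<ge>N. norm (mat_pow n M k i j / of_nat (fact k)) \<le> (real n * B) ^ k / fact k"
      using norm_mat_pow_le[OF assms] by (auto simp: norm_divide divide_right_mono)
    show "summable (\<lambda>k. (real n * B) ^ k / fact k)"
      using summable_exp[of "real n * B"] by (simp add: divide_inverse mult.commute)
  qed
  then show ?thesis unfolding mat_exp_def by (rule summable_sums)
qed

lemma mat_exp_lincomb_sums:
  assumes "\<And>i j. cmod (M i j) \<le> B" "0 \<le> B"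
  shows "(\<lambda>k. (\<Sum>l<n. w l * mat_pow n M k (r l) (s l)) / of_nat (fact k))
           sums (\<Sum>l<n. w l * mat_exp n M (r l) (s l))"
proof -
  have "(\<lambda>k. \<Sum>l<n. w l * (mat_pow n M k (r l) (s l) / of_nat (fact k)))
          sums (\<Sum>l<n. w l * mat_exp n M (r l) (s l))"
    by (intro sums_sum sums_mult mat_exp_series_sums[OF assms])
  then show ?thesis by (simp add: sum_divide_distrib)
qed

lemma exp_series_scaled: "(\<lambda>k. c ^ k * x / of_nat (fact k)) sums (exp c * (x::complex))"
proof -
  have "(\<lambda>k. c ^ k /\<^sub>R fact k * x) sums (exp c * x)"
    by (intro sums_mult2 exp_converges)
  then show ?thesis by (simp add: scaleR_conv_of_real divide_inverse mult_ac)
qed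

lemma mat_pow_left_eigvec:
  assumes ev: "\<And>l. l < n \<Longrightarrow> (\<Sum>i<n. v i * M i l) = c * v l" and "j < n"
  shows "(\<Sum>i<n. v i * mat_pow n M k i j) = c ^ k * v j"
  using \<open>j < n\<close>
proof (induction k arbitrary: j)
  case 0
  then show ?case by (simp add: mat_id_def if_distrib sum.delta cong: if_cong)
next
  case (Suc k)
  have "(\<Sum>i<n. v i * mat_pow n M (Suc k) i j) = (\<Sum>l<n. (\<Sum>i<n. v i * M i l) * mat_pow n M k l j)"
    unfolding mat_pow.simps mat_mult_def sum_distrib_left sum_distrib_right mult.assoc
    by (rule sum.swap)
  also have "\<dots> = c * (\<Sum>l<n. v l * mat_pow n M k l j)"
    by (simp add: ev sum_distrib_left mult.assoc)
  finally show ?case by (simp add: Suc)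
qed

lemma mat_pow_right_eigvec:
  assumes ev: "\<And>i. i < n \<Longrightarrow> mat_vec n M v i = c * v i" and "i < n"
  shows "mat_vec n (mat_pow n M k) v i = c ^ k * v i"
  using \<open>i < n\<close>
proof (induction k arbitrary: i)
  case 0
  then show ?case
    by (simp add: mat_vec_def mat_id_def if_distrib[where f = "\<lambda>x. x * _"] sum.delta' cong: if_cong)
next
  case (Suc k)
  have "mat_vec n (mat_pow n M (Suc k)) v i = (\<Sum>l<n. M i l * mat_vec n (mat_pow n M k) v l)"
    unfolding mat_vec_def mat_pow.simps mat_mult_def sum_distrib_left sum_distrib_right mult.assoc
    by (rule sum.swap)
  also have "\<dots> = (\<Sum>l<n. M i l * (c ^ k * v l))"
    by (rule sum.cong) (simp_all add: Suc.IH)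
  also have "\<dots> = c ^ k * mat_vec n M v i"
    by (simp add: mat_vec_def sum_distrib_left mult_ac)
  finally show ?case by (simp add: ev Suc.prems)
qed

lemma mat_exp_left_eigvec:
  assumes "\<And>i j. cmod (M i j) \<le> B" "0 \<le> B"
    and "\<And>l. l < n \<Longrightarrow> (\<Sum>i<n. v i * M i l) = c * v l" and "j < n"
  shows "(\<Sum>i<n. v i * mat_exp n M i j) = exp c * v j"
proof -
  have "(\<lambda>k. c ^ k * v j / of_nat (fact k)) sums (\<Sum>i<n. v i * mat_exp n M i j)"
    using mat_exp_lincomb_sums[where n = n and M = M and B = B and w = v and r = id and s = "\<lambda>_. j"]
    by (simp add: assms(1,2) mat_pow_left_eigvec[OF assms(3,4)])
  then show ?thesis using exp_series_scaled sums_unique2 by blast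
qed

lemma mat_exp_right_eigvec:
  assumes "\<And>i j. cmod (M i j) \<le> B" "0 \<le> B"
    and "\<And>i. i < n \<Longrightarrow> mat_vec n M v i = c * v i" and "i < n"
  shows "mat_vec n (mat_exp n M) v i = exp c * v i"
proof -
  have "(\<lambda>k. (\<Sum>l<n. v l * mat_pow n M k i l) / of_nat (fact k))
          sums (\<Sum>l<n. v l * mat_exp n M i l)"
    using mat_exp_lincomb_sums[where n = n and M = M and B = B and w = v and r = "\<lambda>_. i" and s = id]
    by (simp add: assms(1,2))
  moreover have "(\<Sum>l<n. v l * mat_pow n M k i l) = c ^ k * v i" for k
    using mat_pow_right_eigvec[OF assms(3,4)] by (simp add: mat_vec_def mult.commute)
  ultimately have "(\<lambda>k. c ^ k * v i / of_nat (fact k)) sums mat_vec n (mat_exp n M) v i"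
    by (simp add: mat_vec_def mult.commute)
  then show ?thesis using exp_series_scaled sums_unique2 by blast
qed

lemma degree_le: "degree n E v \<le> n"
proof -
  have "{w. w < n \<and> E v w} \<subseteq> {..<n}" by auto
  then show ?thesis unfolding degree_def by (metis card_lessThan card_mono finite_lessThan)
qed

lemma norm_laplacian_le: "cmod (laplacian n E i j) \<le> real n + 1"
proof -
  have "cmod (laplacian n E i j) \<le> cmod (deg_mat n E i j) + cmod (adj_mat E i j)"
    unfolding laplacian_def by (rule norm_triangle_ineq4)
  also have "\<dots> \<le> real n + 1"
    by (intro add_mono) (simp_all add: deg_mat_def adj_mat_def degree_le)
  finally show ?thesis .
qed

lemma laplacian_sym: "symp E \<Longrightarrow> laplacian n E i j = laplacian n E j i"
  by (auto simp: laplacian_def deg_mat_def adj_mat_def dest: sympD)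

lemma norm_transition_generator_le:
  "cmod (\<i> * of_real t * laplacian n E i j) \<le> \<bar>t\<bar> * (real n + 1)"
  by (simp add: norm_mult mult_left_mono norm_laplacian_le)

lemma transition_right_eigvec:
  assumes ev: "\<And>i. i < n \<Longrightarrow> mat_vec n (laplacian n E) w i = \<mu> * w i" and "i < n"
  shows "mat_vec n (transition n E t) w i = exp (\<i> * of_real t * \<mu>) * w i"
  unfolding transition_def
proof (rule mat_exp_right_eigvec[OF norm_transition_generator_le _ _ \<open>i < n\<close>])
  fix i assume "i < n"
  have "mat_vec n (\<lambda>i j. \<i> * of_real t * laplacian n E i j) w i
          = \<i> * of_real t * mat_vec n (laplacian n E) w i"
    by (simp add: mat_vec_def sum_distrib_left mult.assoc)
  then show "mat_vec n (\<lambda>i j. \<i> * of_real t * laplacian n E i j) w i = \<i> * of_real t * \<mu> * w i"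
    using ev[OF \<open>i < n\<close>] by simp
qed simp

lemma transition_left_eigvec:
  assumes "symp E" and ev: "\<And>i. i < n \<Longrightarrow> mat_vec n (laplacian n E) w i = \<mu> * w i" and "j < n"
  shows "(\<Sum>i<n. w i * transition n E t i j) = exp (\<i> * of_real t * \<mu>) * w j"
  unfolding transition_def
proof (rule mat_exp_left_eigvec[OF norm_transition_generator_le _ _ \<open>j < n\<close>])
  fix l assume "l < n"
  have "(\<Sum>i<n. w i * (\<i> * of_real t * laplacian n E i l))
          = \<i> * of_real t * mat_vec n (laplacian n E) w l"
    using laplacian_sym[OF \<open>symp E\<close>] by (simp add: mat_vec_def sum_distrib_left mult_ac)
  then show "(\<Sum>i<n. w i * (\<i> * of_real t * laplacian n E i l)) = \<i> * of_real t * \<mu> * w l"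
    using ev[OF \<open>l < n\<close>] by simp
qed simp

lemma transition_zero: "i < n \<Longrightarrow> mat_vec n (transition n E 0) u i = u i"
  using mat_exp_right_eigvec[of "\<lambda>_ _. 0" 0 n u 0 i] by (simp add: transition_def mat_vec_def)

lemma sum_mult_std_basis: "a < n \<Longrightarrow> (\<Sum>j<n. f j * std_basis a j) = f a"
  by (simp add: std_basis_def if_distrib[where f = "\<lambda>x. _ * x"] sum.delta cong: if_cong)

lemma pair_transfer_eigvec:
  assumes "symp E" and ev: "\<And>i. i < n \<Longrightarrow> mat_vec n (laplacian n E) w i = \<mu> * w i"
    and "a < n" "b < n" "c < n" "d < n"
    and U: "\<And>i. i < n \<Longrightarrow> mat_vec n (transition n E t) (\<lambda>v. std_basis a v - std_basis b v) i
                              = \<gamma> * (std_basis c i - std_basis d i)"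
  shows "exp (\<i> * of_real t * \<mu>) * (w a - w b) = \<gamma> * (w c - w d)"
proof -
  let ?u = "\<lambda>v. std_basis a v - std_basis b v"
  have "(\<Sum>i<n. w i * mat_vec n (transition n E t) ?u i)
          = (\<Sum>j<n. (\<Sum>i<n. w i * transition n E t i j) * ?u j)"
    unfolding mat_vec_def sum_distrib_left sum_distrib_right mult.assoc by (rule sum.swap)
  also have "\<dots> = exp (\<i> * of_real t * \<mu>) * (\<Sum>j<n. w j * ?u j)"
    by (simp add: transition_left_eigvec[OF \<open>symp E\<close> ev] sum_distrib_left mult_ac)
  also have "\<dots> = exp (\<i> * of_real t * \<mu>) * (w a - w b)"
    by (simp add: right_diff_distrib sum_subtractf sum_mult_std_basis assms(3,4))
  finally have "(\<Sum>i<n. w i * mat_vec n (transition n E t) ?u i) = exp (\<i> * of_real t * \<mu>) * (w a - w b)" .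
  moreover have "(\<Sum>i<n. w i * mat_vec n (transition n E t) ?u i) = \<gamma> * (w c - w d)"
    by (simp add: U right_diff_distrib sum_subtractf sum_mult_std_basis assms(5,6)
        sum_distrib_left[symmetric] mult.left_commute[of _ \<gamma>])
  ultimately show ?thesis by simp
qed

section \<open>Spectrum of the path\<close>

lemma symp_path_adj: "symp path_adj"
  by (auto simp: symp_def path_adj_def)

lemma degree_path:
  assumes "i < n"
  shows "degree n path_adj i = (if 0 < i then 1 else 0) + (if Suc i < n then 1 else 0)"
proof -
  have "{w. w < n \<and> path_adj i w} = (if 0 < i then {i - 1} else {}) \<union> (if Suc i < n then {Suc i} else {})"
    using assms by (auto simp: path_adj_def split: if_splits)
  then show ?thesis by (simp add: degree_def)
qed

lemma path_laplacian_apply: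
  assumes "i < n"
  shows "mat_vec n (laplacian n path_adj) v i = of_nat (degree n path_adj i) * v i
           - (if 0 < i then v (i - 1) else 0) - (if Suc i < n then v (Suc i) else 0)"
proof -
  have "mat_vec n (laplacian n path_adj) v i =
          (\<Sum>j<n. if j = i then of_nat (degree n path_adj i) * v i else 0)
        - (\<Sum>j<n. if 0 < i \<and> j = i - 1 then v j else 0)
        - (\<Sum>j<n. if j = Suc i then v j else 0)"
    unfolding mat_vec_def sum_subtractf[symmetric]
    by (rule sum.cong) (auto simp: laplacian_def deg_mat_def adj_mat_def path_adj_def algebra_simps)
  also have "\<dots> = of_nat (degree n path_adj i) * v i
           - (if 0 < i then v (i - 1) else 0) - (if Suc i < n then v (Suc i) else 0)"
    using assms by (cases i) (simp_all add: sum.delta)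
  finally show ?thesis .
qed

definition path_lap :: "nat \<Rightarrow> (nat \<Rightarrow> real) \<Rightarrow> nat \<Rightarrow> real" where
  "path_lap n w i = real (degree n path_adj i) * w i
     - (if 0 < i then w (i - 1) else 0) - (if Suc i < n then w (Suc i) else 0)"

lemma path_laplacian_of_real:
  "i < n \<Longrightarrow> mat_vec n (laplacian n path_adj) (\<lambda>j. of_real (w j)) i = of_real (path_lap n w i)"
  unfolding path_laplacian_apply path_lap_def by (cases "0 < i"; cases "Suc i < n") simp_all

lemma path_transition_real_eigvec:
  assumes "\<And>i. i < n \<Longrightarrow> path_lap n w i = \<mu> * w i" and "i < n"
  shows "mat_vec n (transition n path_adj t) (\<lambda>j. of_real (w j)) i
           = exp (\<i> * of_real (t * \<mu>)) * of_real (w i)"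
  using transition_right_eigvec[of n path_adj "\<lambda>j. of_real (w j)" "of_real \<mu>" i t] assms
  by (simp add: path_laplacian_of_real mult.assoc)

definition cos_frac :: "nat \<Rightarrow> nat \<Rightarrow> real" where
  "cos_frac N p = cos (real p * pi / real N)"

definition path_eigvec :: "nat \<Rightarrow> nat \<Rightarrow> nat \<Rightarrow> real" where
  "path_eigvec n k j = cos_frac (2 * n) (k * (2 * j + 1))"

definition path_eigval :: "nat \<Rightarrow> nat \<Rightarrow> real" where
  "path_eigval n k = 2 - 2 * cos_frac n k"

lemma cos_add_cos_diff: "cos (y - x) + cos (y + x) = 2 * cos x * cos (y::real)"
  by (simp add: cos_add cos_diff algebra_simps)

lemma path_eigvec_equation:
  assumes "2 \<le> n" "i < n"
  shows "path_lap n (path_eigvec n k) i = path_eigval n k * path_eigvec n k i"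
proof -
  define x where "x = real k * pi / real n"
  have V: "path_eigvec n k j = cos ((2 * real j + 1) * x / 2)" for j
    unfolding path_eigvec_def cos_frac_def x_def by (simp add: field_simps)
  have eigval: "path_eigval n k = 2 - 2 * cos x"
    unfolding path_eigval_def cos_frac_def x_def by simp
  have half: "cos (x / 2) + cos (3 * x / 2) = 2 * cos x * cos (x / 2)"
    using cos_add_cos_diff[of "x / 2" x] by (simp add: field_simps)
  consider (inner) "0 < i" "Suc i < n" | (first) "i = 0" | (last) "0 < i" "Suc i = n"
    using assms by linarith
  then show ?thesis
  proof cases
    case inner
    have "cos ((2 * real (i - 1) + 1) * x / 2) = cos ((2 * real i + 1) * x / 2 - x)"
      "cos ((2 * real (Suc i) + 1) * x / 2) = cos ((2 * real i + 1) * x / 2 + x)"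
      using inner by (simp_all add: of_nat_diff field_simps)
    then show ?thesis
      unfolding path_lap_def V eigval using inner degree_path[OF assms(2)] cos_add_cos_diff[of "(2 * real i + 1) * x / 2" x]
      by (simp add: algebra_simps)
  next
    case first
    then show ?thesis
      unfolding path_lap_def V eigval using degree_path[OF assms(2)] assms(1) half by (simp add: algebra_simps)
  next
    case last
    have e1: "(2 * real i + 1) * x / 2 = real k * pi - x / 2"
      and e2: "(2 * real (i - 1) + 1) * x / 2 = real k * pi - 3 * x / 2"
      using last unfolding x_def by (simp_all add: of_nat_diff field_simps flip: \<open>Suc i = n\<close>)
    have flip: "cos (real k * pi - y) = (-1) ^ k * cos y" for y
      by (simp add: cos_diff)
    have half': "cos (3 * x / 2) = 2 * cos x * cos (x / 2) - cos (x / 2)"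
      using half by simp
    show ?thesis
      unfolding path_lap_def V eigval e1 e2 flip half' using last degree_path[OF assms(2)] by (simp add: algebra_simps)
  qed
qed

definition path_pair_coeff :: "nat \<Rightarrow> nat \<Rightarrow> nat \<Rightarrow> nat \<Rightarrow> real" where
  "path_pair_coeff n a b k = path_eigvec n k a - path_eigvec n k b"

lemma path_pair_PST_phases:
  assumes "2 \<le> n" "a < n" "b < n" "c < n" "d < n" "a \<noteq> b" "{a, b} \<noteq> {c, d}"
    and "pair_PST n path_adj a b c d"
  obtains t \<gamma> where "t \<noteq> 0" "cmod \<gamma> = 1"
    "\<And>k. exp (\<i> * of_real (t * path_eigval n k)) * of_real (path_pair_coeff n a b k)
           = \<gamma> * of_real (path_pair_coeff n c d k)"
proof -
  obtain t \<gamma> where "cmod \<gamma> = 1" and U: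
    "\<And>i. i < n \<Longrightarrow> mat_vec n (transition n path_adj t) (\<lambda>v. std_basis a v - std_basis b v) i
                   = \<gamma> * (std_basis c i - std_basis d i)"
    using assms(8) unfolding pair_PST_def by blast
  have "t \<noteq> 0"
  proof
    assume "t = 0"
    then have "std_basis a i - std_basis b i = \<gamma> * (std_basis c i - std_basis d i)" if "i < n" for i
      using U[OF that] transition_zero[OF that] by simp
    from this[OF assms(2)] this[OF assms(3)] show False
      using assms(6,7) by (auto simp: std_basis_def split: if_splits)
  qed
  moreover have "exp (\<i> * of_real (t * path_eigval n k)) * of_real (path_pair_coeff n a b k)
                   = \<gamma> * of_real (path_pair_coeff n c d k)" for k
  proof -
    have "mat_vec n (laplacian n path_adj) (\<lambda>j. of_real (path_eigvec n k j)) i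
            = of_real (path_eigval n k) * of_real (path_eigvec n k i)" if "i < n" for i
      using path_laplacian_of_real[OF that] path_eigvec_equation[OF assms(1) that] by simp
    from pair_transfer_eigvec[OF symp_path_adj this assms(2-5) U] show ?thesis
      by (simp add: path_pair_coeff_def mult.assoc)
  qed
  ultimately show ?thesis using that \<open>cmod \<gamma> = 1\<close> by blast
qed

lemma abs_eq_of_phase:
  assumes "cmod \<gamma> = 1" "exp (\<i> * of_real x) * of_real A = \<gamma> * of_real B"
  shows "\<bar>A\<bar> = \<bar>B\<bar>"
  using arg_cong[OF assms(2), of cmod] assms(1) by (simp add: norm_mult)

lemma sin_diff_zero_of_phases:
  assumes x: "exp (\<i> * of_real x) * of_real A = \<gamma> * of_real B"
    and y: "exp (\<i> * of_real y) * of_real A' = \<gamma> * of_real B'"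
    and "A \<noteq> 0" "B' \<noteq> 0"
  shows "sin (x - y) = 0"
proof -
  have "exp (\<i> * of_real x) * of_real (A * B') = (exp (\<i> * of_real x) * of_real A) * of_real B'"
    by (simp add: mult.assoc)
  also have "\<dots> = (\<gamma> * of_real B) * of_real B'"
    by (simp only: x)
  also have "\<dots> = (\<gamma> * of_real B') * of_real B"
    by (simp only: mult_ac)
  also have "\<dots> = (exp (\<i> * of_real y) * of_real A') * of_real B"
    by (simp only: y)
  also have "\<dots> = exp (\<i> * of_real y) * of_real (A' * B)"
    by (simp add: mult.assoc)
  finally have "exp (\<i> * of_real (x - y)) = of_real (A' * B / (A * B'))"
    using assms(3,4) by (simp add: exp_diff field_simps)
  then have "Im (exp (\<i> * of_real (x - y))) = 0" by simp
  then show ?thesis by (simp add: Im_exp)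
qed

text \<open>The index \<open>k\<close> ranges over all of \<open>\<nat>\<close>: \<open>path_eigvec n k\<close> is an eigenvector (or zero) for
  every \<open>k\<close>, so the arguments below may use indices up to \<open>2n\<close>.\<close>
definition pair_support :: "nat \<Rightarrow> nat \<Rightarrow> nat \<Rightarrow> nat set" where
  "pair_support n a b = {k. path_pair_coeff n a b k \<noteq> 0}"

definition commensurable_cos :: "nat \<Rightarrow> nat set \<Rightarrow> bool" where
  "commensurable_cos n S \<longleftrightarrow> (\<exists>s. s \<noteq> 0 \<and> (\<forall>j\<in>S. \<forall>k\<in>S. s * (cos_frac n j - cos_frac n k) \<in> \<int>))"

lemma path_pair_PST_abs_coeff:
  assumes "2 \<le> n" "a < n" "b < n" "c < n" "d < n" "a \<noteq> b" "{a, b} \<noteq> {c, d}"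
    and "pair_PST n path_adj a b c d"
  shows "\<bar>path_pair_coeff n a b k\<bar> = \<bar>path_pair_coeff n c d k\<bar>"
  by (rule path_pair_PST_phases[OF assms]) (blast intro: abs_eq_of_phase)

lemma path_pair_PST_commensurable:
  assumes "2 \<le> n" "a < n" "b < n" "c < n" "d < n" "a \<noteq> b" "{a, b} \<noteq> {c, d}"
    and "pair_PST n path_adj a b c d"
  shows "commensurable_cos n (pair_support n a b)"
proof (rule path_pair_PST_phases[OF assms])
  fix t \<gamma>
  assume "t \<noteq> 0" and phase: "\<And>k. exp (\<i> * of_real (t * path_eigval n k)) * of_real (path_pair_coeff n a b k)
                              = \<gamma> * of_real (path_pair_coeff n c d k)"
  have "2 * t / pi * (cos_frac n j - cos_frac n k) \<in> \<int>"
    if "j \<in> pair_support n a b" "k \<in> pair_support n a b" for j k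
  proof -
    have "path_pair_coeff n c d k \<noteq> 0"
      using that(2) path_pair_PST_abs_coeff[OF assms, of k] by (auto simp: pair_support_def)
    then have "sin (t * path_eigval n j - t * path_eigval n k) = 0"
      using that(1) by (intro sin_diff_zero_of_phases[OF phase phase]) (simp add: pair_support_def)
    then obtain z :: int where "t * path_eigval n j - t * path_eigval n k = of_int z * pi"
      by (auto simp: sin_zero_iff_int2)
    then have "2 * t / pi * (cos_frac n j - cos_frac n k) = - of_int z"
      by (simp add: path_eigval_def field_simps)
    then show ?thesis by simp
  qed
  then show ?thesis unfolding commensurable_cos_def using \<open>t \<noteq> 0\<close> by (intro exI[of _ "2 * t / pi"]) auto
qed

section \<open>Values of the cosine at rational multiples of \<pi>\<close>

lemma cos_frac_reflect: "k \<le> N \<Longrightarrow> 0 < N \<Longrightarrow> cos_frac N (N - k) = - cos_frac N k"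
proof -
  assume "k \<le> N" "0 < N"
  then have "real (N - k) * pi / real N = pi - real k * pi / real N"
    by (simp add: of_nat_diff field_simps)
  then show ?thesis by (simp add: cos_frac_def)
qed

lemma cos_frac_double: "cos_frac N (2 * k) = 2 * (cos_frac N k)\<^sup>2 - 1"
  using cos_double_cos[of "real k * pi / real N"] by (simp add: cos_frac_def mult.assoc)

lemma cos_frac_triple: "cos_frac N (3 * k) = 4 * (cos_frac N k) ^ 3 - 3 * cos_frac N k"
  using cos_treble_cos[of "real k * pi / real N"] by (simp add: cos_frac_def mult.assoc)

lemma cos_frac_pos:
  assumes "2 * k < N"
  shows "0 < cos_frac N k"
proof -
  have "real k * pi / real N < pi / 2" using assms by (simp add: field_simps)
  moreover have "0 \<le> real k * pi / real N" by simp
  ultimately show ?thesis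
    unfolding cos_frac_def using pi_gt_zero by (intro cos_gt_zero_pi) linarith+
qed

lemma cos_frac_strict_antimono: "p < q \<Longrightarrow> q \<le> N \<Longrightarrow> cos_frac N q < cos_frac N p"
  unfolding cos_frac_def by (rule cos_monotone_0_pi) (auto simp: field_simps)

lemma cos_frac_add_sub:
  "0 < N \<Longrightarrow> cos_frac N p + cos_frac N (p + 2 * h) = 2 * cos_frac N h * cos_frac N (p + h)"
  using cos_add_cos_diff[of "real (p + h) * pi / real N" "real h * pi / real N"]
  by (simp add: cos_frac_def field_simps)

lemma sin_frac_eq_zero_iff:
  assumes "0 < N"
  shows "sin (of_int z * pi / real N) = 0 \<longleftrightarrow> int N dvd z"
proof -
  have "of_int z * pi / real N = of_int i * pi \<longleftrightarrow> z = i * int N" for i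
  proof -
    have "of_int z * pi / real N = of_int i * pi \<longleftrightarrow> real_of_int z = of_int (i * int N)"
      using assms by (simp add: field_simps)
    then show ?thesis by (simp only: of_int_eq_iff)
  qed
  then show ?thesis by (auto simp: sin_zero_iff_int2 dvd_def mult.commute)
qed

lemma cos_frac_eq_imp_dvd:
  assumes "0 < N" "cos_frac N p = cos_frac N q"
  shows "int (2 * N) dvd int p + int q \<or> int (2 * N) dvd int q - int p"
proof -
  have "(real p * pi / real N + real q * pi / real N) / 2 = of_int (int p + int q) * pi / real (2 * N)"
    "(real q * pi / real N - real p * pi / real N) / 2 = of_int (int q - int p) * pi / real (2 * N)"
    using assms(1) by (simp_all add: field_simps)
  then have "sin (of_int (int p + int q) * pi / real (2 * N)) = 0
           \<or> sin (of_int (int q - int p) * pi / real (2 * N)) = 0"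
    using assms(2) cos_diff_cos[of "real p * pi / real N" "real q * pi / real N"]
    by (simp add: cos_frac_def) (metis mult.commute)
  moreover have "0 < 2 * N" using assms(1) by simp
  ultimately show ?thesis unfolding sin_frac_eq_zero_iff[OF \<open>0 < 2 * N\<close>] by blast
qed

lemma cos_frac_eq_imp_add_eq:
  assumes "cos_frac N p = cos_frac N q" "p < 2 * N" "q < 2 * N" "p \<noteq> q"
  shows "p + q = 2 * N"
proof -
  have "0 < N" using assms(2) by simp
  from cos_frac_eq_imp_dvd[OF this assms(1)]
  show ?thesis
  proof
    assume "int (2 * N) dvd int p + int q"
    then have "2 * N dvd p + q" by (simp only: of_nat_add[symmetric] int_dvd_int_iff)
    then obtain m where m: "p + q = 2 * N * m" by blast
    then have "2 * N * m < 2 * N * 2" using assms(2,3) by linarith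
    then have "m < 2" by simp
    moreover have "m \<noteq> 0" using m assms(4) by (cases "m = 0") auto
    ultimately have "m = 1" by linarith
    then show ?thesis using m by simp
  next
    assume "int (2 * N) dvd int q - int p"
    then have "\<bar>int (2 * N)\<bar> \<le> \<bar>int q - int p\<bar>" using assms(4) by (intro dvd_imp_le_int) simp_all
    then show ?thesis using assms(2,3) by linarith
  qed
qed

fun dickson :: "int \<Rightarrow> int \<Rightarrow> nat \<Rightarrow> int" where
  "dickson x a 0 = 2"
| "dickson x a (Suc 0) = x"
| "dickson x a (Suc (Suc k)) = x * dickson x a (Suc k) - a * dickson x a k"

lemma dickson_cos:
  assumes "Q \<noteq> 0" "2 * cos \<theta> = of_int P / of_int Q"
  shows "of_int (dickson P (Q\<^sup>2) k) = of_int Q ^ k * (2 * cos (real k * \<theta>))"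
proof (induction k rule: induct_nat_012)
  case (ge2 k)
  have "real (Suc k) * \<theta> - \<theta> = real k * \<theta>" "real (Suc k) * \<theta> + \<theta> = real (Suc (Suc k)) * \<theta>"
    by (simp_all add: algebra_simps)
  then have rec: "2 * cos \<theta> * (2 * cos (real (Suc k) * \<theta>)) - 2 * cos (real k * \<theta>)
                    = 2 * cos (real (Suc (Suc k)) * \<theta>)"
    using cos_add_cos_diff[of "real (Suc k) * \<theta>" \<theta>] by simp
  have P: "real_of_int P = 2 * cos \<theta> * of_int Q" using assms by (simp add: field_simps)
  have "real_of_int (dickson P (Q\<^sup>2) (Suc (Suc k)))
          = of_int P * of_int (dickson P (Q\<^sup>2) (Suc k)) - of_int Q ^ 2 * of_int (dickson P (Q\<^sup>2) k)"
    by simp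
  also have "\<dots> = of_int Q ^ Suc (Suc k) * (2 * cos \<theta> * (2 * cos (real (Suc k) * \<theta>)) - 2 * cos (real k * \<theta>))"
    unfolding ge2 P by (simp add: algebra_simps power2_eq_square)
  finally show ?case unfolding rec .
qed (use assms in auto)

lemma dickson_congruent: "a dvd dickson x a (Suc k) - x ^ Suc k"
proof (induction k)
  case (Suc k)
  have "dickson x a (Suc (Suc k)) - x ^ Suc (Suc k)
          = x * (dickson x a (Suc k) - x ^ Suc k) - a * dickson x a k"
    by (simp add: algebra_simps)
  then show ?case by (simp only: dvd_diff[OF dvd_mult[OF Suc.IH] dvd_triv_left])
qed simp

text \<open>Niven's argument: if \<open>2 cos (h\<pi>/N) = P/Q\<close> in lowest terms, then
  \<open>Q\<^sup>N \<cdot> 2 cos (h\<pi>) = D\<^sub>N(P, Q\<^sup>2) \<equiv> P\<^sup>N (mod Q)\<close>, so \<open>Q\<close> divides \<open>P\<^sup>N\<close> and is a unit.\<close>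
lemma two_cos_frac_Ints_if_Rats:
  assumes "0 < N" "2 * cos_frac N h \<in> \<rat>"
  shows "2 * cos_frac N h \<in> \<int>"
proof -
  obtain P Q :: int where "Q > 0" "coprime P Q" and PQ: "2 * cos_frac N h = of_int P / of_int Q"
    using Rats_cases'[OF assms(2)] by metis
  define \<theta> where "\<theta> = real h * pi / real N"
  have "of_int (dickson P (Q\<^sup>2) N) = of_int Q ^ N * (2 * cos (real N * \<theta>))"
    using dickson_cos PQ \<open>Q > 0\<close> by (simp add: cos_frac_def \<theta>_def)
  also have "real N * \<theta> = real h * pi" using assms(1) by (simp add: \<theta>_def)
  finally have "real_of_int (dickson P (Q\<^sup>2) N) = of_int (Q ^ N * (2 * (-1) ^ h))" by simp
  then have D: "dickson P (Q\<^sup>2) N = Q ^ N * (2 * (-1) ^ h)" by (simp only: of_int_eq_iff)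
  obtain N' where N': "N = Suc N'" using assms(1) by (cases N) auto
  have "Q dvd dickson P (Q\<^sup>2) N" unfolding D using N' by simp
  moreover have "Q dvd dickson P (Q\<^sup>2) N - P ^ N"
    unfolding N' by (rule dvd_trans[OF _ dickson_congruent]) simp
  ultimately have "Q dvd dickson P (Q\<^sup>2) N - (dickson P (Q\<^sup>2) N - P ^ N)" by (rule dvd_diff)
  then have "Q dvd P ^ N" by simp
  moreover have "coprime (P ^ N) Q" using \<open>coprime P Q\<close> by simp
  ultimately have "is_unit Q" by (intro coprime_common_divisor[of "P ^ N" Q]) simp_all
  then show ?thesis using \<open>Q > 0\<close> PQ by simp
qed

lemma cos_frac_not_Rats:
  assumes "0 < h" "3 * h < N"
  shows "cos_frac N h \<notin> \<rat>"
proof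
  assume "cos_frac N h \<in> \<rat>"
  then have "2 * cos_frac N h \<in> \<int>"
    using assms by (intro two_cos_frac_Ints_if_Rats) auto
  then obtain z :: int where z: "2 * cos_frac N h = of_int z" by (auto elim: Ints_cases)
  have x: "0 < real h * pi / real N" "real h * pi / real N < pi / 3"
    using assms by (simp_all add: field_simps)
  have "cos (pi / 3) < cos_frac N h"
    unfolding cos_frac_def by (rule cos_monotone_0_pi) (use x pi_gt_zero in linarith)+
  moreover have "cos_frac N h < cos 0"
    unfolding cos_frac_def by (rule cos_monotone_0_pi) (use x pi_gt_zero in linarith)+
  ultimately have "1 < 2 * cos_frac N h" "2 * cos_frac N h < 2" by (simp_all add: cos_60)
  then show False unfolding z by simp
qed

section \<open>Eigenvalue supports that are not commensurable\<close>

lemma divide_Rats_if_common_multiple_Ints: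
  assumes "s \<noteq> 0" "s * x \<in> \<int>" "s * y \<in> \<int>"
  shows "x / y \<in> \<rat>"
proof -
  have "s * x / (s * y) \<in> \<rat>" using assms(2,3) Ints_subset_Rats by (intro Rats_divide) auto
  then show ?thesis using assms(1) by simp
qed

lemma not_commensurable_cos_arith_prog:
  assumes "p \<in> S" "p + h \<in> S" "p + 2 * h \<in> S" "p + 3 * h \<in> S"
    and "cos_frac n (p + h) \<noteq> cos_frac n (p + 2 * h)" "0 < h" "3 * h < n"
  shows "\<not> commensurable_cos n S"
proof
  assume "commensurable_cos n S"
  then obtain s where "s \<noteq> 0" and s: "\<And>j k. j \<in> S \<Longrightarrow> k \<in> S \<Longrightarrow> s * (cos_frac n j - cos_frac n k) \<in> \<int>"
    unfolding commensurable_cos_def by blast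
  define D where "D = cos_frac n (p + h) - cos_frac n (p + 2 * h)"
  have "0 < n" using assms(7) by simp
  have "p + h + 2 * h = p + 3 * h" "p + h + h = p + 2 * h" by simp_all
  then have "cos_frac n (p + h) + cos_frac n (p + 3 * h) = 2 * cos_frac n h * cos_frac n (p + 2 * h)"
    using cos_frac_add_sub[OF \<open>0 < n\<close>, of "p + h" h] by (simp only:)
  then have "(cos_frac n p - cos_frac n (p + h)) + (cos_frac n (p + 2 * h) - cos_frac n (p + 3 * h))
               = 2 * cos_frac n h * D"
    unfolding D_def right_diff_distrib using cos_frac_add_sub[OF \<open>0 < n\<close>, of p h] by linarith
  moreover have "s * ((cos_frac n p - cos_frac n (p + h)) + (cos_frac n (p + 2 * h) - cos_frac n (p + 3 * h))) \<in> \<int>"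
    unfolding distrib_left using s[OF assms(1,2)] s[OF assms(3,4)] by (rule Ints_add)
  ultimately have "s * (2 * cos_frac n h * D) \<in> \<int>" by simp
  moreover have "s * D \<in> \<int>" unfolding D_def using s[OF assms(2,3)] .
  ultimately have "2 * cos_frac n h * D / D \<in> \<rat>"
    by (rule divide_Rats_if_common_multiple_Ints[OF \<open>s \<noteq> 0\<close>])
  moreover have "D \<noteq> 0" using assms(5) by (simp add: D_def)
  ultimately have "2 * cos_frac n h \<in> \<rat>" by simp
  then have "cos_frac n h \<in> \<rat>" using Rats_divide[of _ 2] by fastforce
  then show False using cos_frac_not_Rats assms(6,7) by blast
qed

lemma commensurable_cos_reflection_ratio:
  assumes "commensurable_cos N S" "0 < N" "i \<le> N" "j \<le> N" "{i, N - i, j, N - j} \<subseteq> S"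
  shows "cos_frac N j / cos_frac N i \<in> \<rat>"
proof -
  obtain s where "s \<noteq> 0" and s: "\<And>j k. j \<in> S \<Longrightarrow> k \<in> S \<Longrightarrow> s * (cos_frac N j - cos_frac N k) \<in> \<int>"
    using assms(1) unfolding commensurable_cos_def by blast
  have "2 * s * cos_frac N k \<in> \<int>" if "k \<le> N" "k \<in> S" "N - k \<in> S" for k
    using s[OF that(2,3)] by (simp add: cos_frac_reflect[OF that(1) assms(2)] algebra_simps)
  then show ?thesis
    using assms(3-5) \<open>s \<noteq> 0\<close> by (intro divide_Rats_if_common_multiple_Ints[of "2 * s"]) (auto simp: mult.assoc)
qed

lemma cos_frac_Rats_of_double_ratio:
  assumes "cos_frac N 1 / cos_frac N 2 \<in> \<rat>" "cos_frac N 4 \<in> \<rat>" "cos_frac N 2 \<noteq> 0"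
  shows "cos_frac N 1 \<in> \<rat>"
proof -
  define q where "q = cos_frac N 1 / cos_frac N 2"
  have c1: "cos_frac N 1 = q * cos_frac N 2" using assms(3) by (simp add: q_def)
  have "cos_frac N 2 = 2 * (cos_frac N 1)\<^sup>2 - 1" "cos_frac N 4 = 2 * (cos_frac N 2)\<^sup>2 - 1"
    using cos_frac_double[of N 1] cos_frac_double[of N 2] by simp_all
  then have "cos_frac N 2 = q\<^sup>2 * (cos_frac N 4 + 1) - 1" unfolding c1 by (simp add: power_mult_distrib)
  moreover have "q \<in> \<rat>" using assms(1) by (simp add: q_def)
  ultimately have "cos_frac N 2 \<in> \<rat>" using assms(2) by (simp add: Rats_diff Rats_mult Rats_add)
  then show ?thesis using \<open>q \<in> \<rat>\<close> unfolding c1 by simp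
qed

lemma cos_frac_Rats_of_triple_ratio:
  assumes "cos_frac N 2 / cos_frac N 1 \<in> \<rat>" "cos_frac N 3 \<in> \<rat>" "\<bar>cos_frac N 3\<bar> \<noteq> 1"
    "cos_frac N 1 \<noteq> 0"
  shows "cos_frac N 1 \<in> \<rat>"
proof -
  define q where "q = cos_frac N 2 / cos_frac N 1"
  define x where "x = cos_frac N 1"
  have double: "2 * x\<^sup>2 = q * x + 1" and triple: "4 * x ^ 3 - 3 * x = cos_frac N 3"
    using cos_frac_double[of N 1] cos_frac_triple[of N 1] assms(4) by (simp_all add: q_def x_def)
  have "4 * x ^ 3 = 2 * x * (2 * x\<^sup>2)" by (simp add: power2_eq_square power3_eq_cube)
  also have "\<dots> = 2 * x * (q * x + 1)" by (simp only: double)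
  also have "\<dots> = q * (2 * x\<^sup>2) + 2 * x" by (simp add: algebra_simps power2_eq_square)
  also have "\<dots> = q * (q * x + 1) + 2 * x" by (simp only: double)
  finally have x: "(q\<^sup>2 - 1) * x = cos_frac N 3 - q"
    using triple by (simp add: algebra_simps power2_eq_square)
  have "q\<^sup>2 \<noteq> 1"
  proof
    assume "q\<^sup>2 = 1"
    then have "\<bar>q\<bar> = 1" by (auto simp: power2_eq_1_iff)
    with x \<open>q\<^sup>2 = 1\<close> assms(3) show False by simp
  qed
  then have "x = (cos_frac N 3 - q) / (q\<^sup>2 - 1)" using x by (simp add: field_simps)
  moreover have "q \<in> \<rat>" using assms(1) by (simp add: q_def)
  ultimately show ?thesis using assms(2) by (simp add: x_def Rats_divide Rats_diff)
qed

lemma not_commensurable_cos_reflection_cases: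
  assumes "N \<in> {6, 8, 9, 12}" "{1, 2, N - 2, N - 1} \<subseteq> S"
  shows "\<not> commensurable_cos N S"
proof
  assume C: "commensurable_cos N S"
  have "0 < N" "4 < N" using assms(1) by auto
  have "cos_frac N 1 \<in> \<rat>"
  proof (cases "N = 9")
    case True
    have c3: "cos_frac 9 3 = 1 / 2" by (simp add: cos_frac_def cos_60)
    have "cos_frac 9 2 / cos_frac 9 1 \<in> \<rat>"
      using commensurable_cos_reflection_ratio[OF C[unfolded True], of 1 2] assms(2) True by auto
    then have "cos_frac 9 1 \<in> \<rat>"
      using cos_frac_pos[of 1 9] by (intro cos_frac_Rats_of_triple_ratio) (simp_all add: c3)
    then show ?thesis using True by simp
  next
    case False
    then have "cos_frac N 4 \<in> \<rat>" using assms(1) by (auto simp: cos_frac_def cos_60 cos_120 Rats_divide)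
    moreover have "cos_frac N 1 / cos_frac N 2 \<in> \<rat>"
      using commensurable_cos_reflection_ratio[OF C \<open>0 < N\<close>, of 2 1] assms(2) \<open>4 < N\<close> by auto
    ultimately show ?thesis using cos_frac_pos[of 2 N] \<open>4 < N\<close>
      by (intro cos_frac_Rats_of_double_ratio) auto
  qed
  then show False using cos_frac_not_Rats[of 1 N] assms(1) by auto
qed

lemma not_commensurable_cos_of_nonmultiples:
  assumes "5 \<le> n" "2 \<le> g" "g dvd n" "(n, g) \<noteq> (6, 2)"
    and S: "\<And>k. 0 < k \<Longrightarrow> k < 2 * n \<Longrightarrow> \<not> g dvd k \<Longrightarrow> k \<in> S"
  shows "\<not> commensurable_cos n S"
proof -
  consider "5 \<le> g" | "g \<le> 4" "3 * g < n" | "g \<le> 4" "n \<le> 3 * g" by linarith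
  then show ?thesis
  proof cases
    case 1
    have "k \<in> S" if "0 < k" "k < 5" for k
      using that 1 assms(1) by (intro S) (auto dest: dvd_imp_le)
    moreover have "cos_frac n 2 \<noteq> cos_frac n 3"
      using cos_frac_strict_antimono[of 2 3 n] assms(1) by simp
    moreover have e: "(1::nat) + 1 = 2" "(1::nat) + 2 * 1 = 3" "(1::nat) + 3 * 1 = 4" by simp_all
    ultimately show ?thesis
      using assms(1) by (intro not_commensurable_cos_arith_prog[of 1 S 1, unfolded e]) auto
  next
    case 2
    have "1 + j * g \<in> S" if "j \<le> 3" for j
    proof (rule S)
      show "1 + j * g < 2 * n" using mult_le_mono1[OF that, of g] 2 by linarith
      show "\<not> g dvd 1 + j * g" using assms(2) by (simp only: dvd_add_times_triv_right_iff) simp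
    qed simp
    from this[of 1] this[of 2] this[of 3] this[of 0]
    have "1 \<in> S" "1 + g \<in> S" "1 + 2 * g \<in> S" "1 + 3 * g \<in> S" by simp_all
    moreover have "cos_frac n (1 + 2 * g) < cos_frac n (1 + g)"
      using 2 assms(2) by (intro cos_frac_strict_antimono) auto
    ultimately show ?thesis using 2 assms(2) by (intro not_commensurable_cos_arith_prog) auto
  next
    case 3
    obtain r where r: "n = g * r" using assms(3) by blast
    have "r \<noteq> 0" using r assms(1) by (intro notI) simp
    moreover have "r \<noteq> 1" using r 3 assms(1) by (intro notI) simp
    moreover have "r \<le> 3" using r 3 assms(2) by simp
    ultimately have "g \<in> {2, 3, 4}" "r \<in> {2, 3}" using 3 assms(2) by auto
    then have "(n, g) \<in> {(6, 3), (9, 3), (8, 4), (12, 4)}" using r assms(1,4) by auto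
    then have "n \<in> {6, 8, 9, 12}" "{1, 2, n - 2, n - 1} \<subseteq> S" by (auto intro: S)
    then show ?thesis by (rule not_commensurable_cos_reflection_cases)
  qed
qed

lemma path_pair_coeff_edge:
  assumes "0 < n"
  shows "path_pair_coeff n a (Suc a) k = 2 * sin (real (k * Suc a) * pi / real n) * sin (real k * pi / real (2 * n))"
proof -
  have "(real (k * (2 * a + 1)) * pi / real (2 * n) + real (k * (2 * Suc a + 1)) * pi / real (2 * n)) / 2
          = real (k * Suc a) * pi / real n"
    "(real (k * (2 * Suc a + 1)) * pi / real (2 * n) - real (k * (2 * a + 1)) * pi / real (2 * n)) / 2
          = real k * pi / real (2 * n)"
    using assms by (simp_all add: field_simps)
  then show ?thesis
    unfolding path_pair_coeff_def path_eigvec_def cos_frac_def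
    by (simp only: cos_diff_cos)
qed

lemma pair_support_edge:
  assumes "0 < n"
  shows "k \<in> pair_support n a (Suc a) \<longleftrightarrow> \<not> n dvd k * Suc a \<and> \<not> 2 * n dvd k"
proof -
  have "0 < 2 * n" using assms by simp
  have "sin (real (k * Suc a) * pi / real n) = 0 \<longleftrightarrow> n dvd k * Suc a"
    "sin (real k * pi / real (2 * n)) = 0 \<longleftrightarrow> 2 * n dvd k"
    using sin_frac_eq_zero_iff[OF assms, of "int (k * Suc a)"] sin_frac_eq_zero_iff[OF \<open>0 < 2 * n\<close>, of "int k"]
    by (simp_all only: of_int_of_nat_eq int_dvd_int_iff)
  then show ?thesis
    unfolding pair_support_def mem_Collect_eq path_pair_coeff_edge[OF assms] mult_eq_0_iff by simp
qed

lemma dvd_mult_iff_div_gcd: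
  fixes n k m :: nat
  assumes "0 < m"
  shows "n dvd k * m \<longleftrightarrow> n div gcd n m dvd k"
proof -
  define d where "d = gcd n m"
  have "0 < d" using assms by (simp add: d_def)
  have n: "n = n div d * d" and m: "m = m div d * d" by (simp_all add: d_def)
  have "coprime (n div d) (m div d)" using assms unfolding d_def by (intro div_gcd_coprime) simp
  have "n dvd k * m \<longleftrightarrow> n div d * d dvd k * (m div d) * d"
    by (subst n, subst m) (simp add: mult.assoc)
  also have "\<dots> \<longleftrightarrow> n div d dvd k * (m div d)" using \<open>0 < d\<close> by simp
  also have "\<dots> \<longleftrightarrow> n div d dvd k" using \<open>coprime (n div d) (m div d)\<close> by (simp add: coprime_dvd_mult_left_iff)
  finally show ?thesis by (simp add: d_def)
qed

lemma not_commensurable_cos_edge_support: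
  assumes "5 \<le> n" "Suc a < n" "\<not> (n = 6 \<and> a = 2)"
  shows "\<not> commensurable_cos n (pair_support n a (Suc a))"
proof (rule not_commensurable_cos_of_nonmultiples)
  define g where "g = n div gcd n (Suc a)"
  have n: "n = g * gcd n (Suc a)" by (simp add: g_def)
  show "g dvd n" by (subst n) simp
  have "g \<noteq> 0" using n assms(1) by (metis mult_0 not_numeral_le_zero)
  moreover have "g \<noteq> 1"
  proof
    assume "g = 1"
    then have "n dvd Suc a" using n by (metis gcd_dvd2 mult_1)
    then show False using assms(2) by (auto dest: dvd_imp_le)
  qed
  ultimately show "2 \<le> g" by linarith
  show "(n, g) \<noteq> (6, 2)"
  proof
    assume "(n, g) = (6, 2)"
    then have "n = 6" "gcd n (Suc a) = 3" using n by simp_all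
    then have "3 dvd Suc a" by (metis gcd_dvd2)
    moreover have "Suc a < 6" using assms(2) \<open>n = 6\<close> by simp
    ultimately have "a = 2" by presburger
    then show False using assms(3) \<open>n = 6\<close> by simp
  qed
  show "k \<in> pair_support n a (Suc a)" if "0 < k" "k < 2 * n" "\<not> g dvd k" for k
  proof -
    have "\<not> n dvd k * Suc a" using that(3) unfolding dvd_mult_iff_div_gcd[OF zero_less_Suc] g_def .
    moreover have "\<not> 2 * n dvd k" using that(1,2) by (auto dest: dvd_imp_le)
    ultimately show ?thesis using pair_support_edge[of n k a] assms(1) by simp
  qed
qed (rule assms(1))

lemma path6_middle_edge_determined_by_abs_coeff:
  assumes "c < 6" "d < 6" "c \<noteq> d"
    and eq: "\<And>k. \<bar>path_pair_coeff 6 2 3 k\<bar> = \<bar>path_pair_coeff 6 c d k\<bar>"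
  shows "{c, d} = {2, 3}"
proof (rule ccontr)
  assume "{c, d} \<noteq> {2, 3}"
  have "2 \<notin> pair_support 6 2 (Suc 2)" by (subst pair_support_edge) simp_all
  then have "path_pair_coeff 6 c d 2 = 0" using eq[of 2] by (simp add: pair_support_def)
  then have "cos_frac 12 (2 * (2 * c + 1)) = cos_frac 12 (2 * (2 * d + 1))"
    by (simp add: path_pair_coeff_def path_eigvec_def)
  then have "2 * (2 * c + 1) + 2 * (2 * d + 1) = 2 * 12"
    using assms(1-3) by (intro cos_frac_eq_imp_add_eq) auto
  then have "(c, d) \<in> {(0, 5), (1, 4), (4, 1), (5, 0)}"
    using \<open>{c, d} \<noteq> {2, 3}\<close> by (auto simp: doubleton_eq_iff)
  then have "path_pair_coeff 6 c d 1 \<in> {2 * cos_frac 12 1, - 2 * cos_frac 12 1, 2 * cos_frac 12 3, - 2 * cos_frac 12 3}"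
    using cos_frac_reflect[of 1 12] cos_frac_reflect[of 3 12]
    by (elim insertE) (simp_all add: path_pair_coeff_def path_eigvec_def)
  moreover have "\<bar>path_pair_coeff 6 2 3 1\<bar> = 2 * cos_frac 12 5"
    using cos_frac_pos[of 5 12] cos_frac_reflect[of 5 12] by (simp add: path_pair_coeff_def path_eigvec_def)
  moreover have "0 < cos_frac 12 5" "cos_frac 12 5 < cos_frac 12 3" "cos_frac 12 3 < cos_frac 12 1"
    by (simp_all add: cos_frac_pos cos_frac_strict_antimono)
  ultimately show False using eq[of 1] by (auto simp: abs_if split: if_splits)
qed

lemma path_pair_coeff_swap: "path_pair_coeff n b a k = - path_pair_coeff n a b k"
  by (simp add: path_pair_coeff_def)

lemma pair_support_swap: "pair_support n b a = pair_support n a b"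
  by (auto simp: pair_support_def path_pair_coeff_def)

lemma path_edge_not_commensurable:
  assumes "5 \<le> n" "path_adj a b" "a < n" "b < n" "c < n" "d < n" "c \<noteq> d" "{a, b} \<noteq> {c, d}"
    and eq: "\<And>k. \<bar>path_pair_coeff n a b k\<bar> = \<bar>path_pair_coeff n c d k\<bar>"
  shows "\<not> commensurable_cos n (pair_support n a b)"
proof -
  obtain e where "Suc e < n" and ab: "(a, b) = (e, Suc e) \<or> (a, b) = (Suc e, e)"
    using assms(2-4) by (auto simp: path_adj_def)
  then have support: "pair_support n a b = pair_support n e (Suc e)"
    and abs: "\<And>k. \<bar>path_pair_coeff n a b k\<bar> = \<bar>path_pair_coeff n e (Suc e) k\<bar>"
    using pair_support_swap[of n e "Suc e"] path_pair_coeff_swap[of n "Suc e" e] by auto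
  show ?thesis
  proof (cases "n = 6 \<and> e = 2")
    case True
    then have "{c, d} = {2, 3}"
      using assms(5-7) eq abs by (intro path6_middle_edge_determined_by_abs_coeff) auto
    moreover have "{a, b} = {2, 3}" using ab True by auto
    ultimately show ?thesis using assms(8) by simp
  next
    case False
    then show ?thesis
      unfolding support using assms(1) \<open>Suc e < n\<close> by (intro not_commensurable_cos_edge_support) auto
  qed
qed

lemma path_edge_no_pair_PST:
  assumes "5 \<le> n" "a < n" "b < n" "c < n" "d < n" "a \<noteq> b" "c \<noteq> d" "{a, b} \<noteq> {c, d}"
    and "path_adj a b \<or> path_adj c d"
  shows "\<not> pair_PST n path_adj a b c d"
proof
  assume pst: "pair_PST n path_adj a b c d"
  have "2 \<le> n" using assms(1) by simp
  note abs = path_pair_PST_abs_coeff[OF \<open>2 \<le> n\<close> assms(2-6,8) pst]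
  have commensurable: "commensurable_cos n (pair_support n a b)"
    using path_pair_PST_commensurable[OF \<open>2 \<le> n\<close> assms(2-6,8) pst] .
  from assms(9) show False
  proof
    assume "path_adj a b"
    then show False
      using path_edge_not_commensurable[OF assms(1) _ assms(2-5,7,8) abs] commensurable by blast
  next
    assume "path_adj c d"
    have "path_pair_coeff n c d k \<noteq> 0 \<longleftrightarrow> path_pair_coeff n a b k \<noteq> 0" for k
      using abs[of k] by (metis abs_eq_0)
    then have "pair_support n c d = pair_support n a b" by (simp add: pair_support_def)
    moreover have "{c, d} \<noteq> {a, b}" using assms(8) by auto
    ultimately show False
      using path_edge_not_commensurable[OF assms(1) \<open>path_adj c d\<close> assms(4,5,2,3,6) _ abs[symmetric]]
        commensurable by simp
  qed
qed

lemma path_edge_pair_PST_imp_3_or_4: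
  assumes "2 \<le> n" "a < n" "b < n" "c < n" "d < n" "a \<noteq> b" "c \<noteq> d" "{a, b} \<noteq> {c, d}"
    and "path_adj a b \<or> path_adj c d" "pair_PST n path_adj a b c d"
  shows "n \<in> {3, 4}"
proof -
  have "n \<noteq> 2"
  proof
    assume "n = 2"
    then have "{a, b} = {0, 1}" "{c, d} = {0, 1}" using assms(2-7) by (auto simp: doubleton_eq_iff)
    with assms(8) show False by simp
  qed
  moreover have "\<not> 5 \<le> n" using path_edge_no_pair_PST[OF _ assms(2-9)] assms(10) by blast
  ultimately show ?thesis using assms(1) by auto
qed

section \<open>Transfer on \<open>P\<^sub>3\<close> and \<open>P\<^sub>4\<close>\<close>

lemma mat_vec_cong: "(\<And>j. j < n \<Longrightarrow> x j = y j) \<Longrightarrow> mat_vec n A x i = mat_vec n A y i"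
  by (simp add: mat_vec_def)

lemma mat_vec_add: "mat_vec n A (\<lambda>j. x j + y j) i = mat_vec n A x i + mat_vec n A y i"
  by (simp add: mat_vec_def distrib_left sum.distrib)

lemma path_pair_PST_of_eigen_expansion:
  fixes es :: "(real \<times> (nat \<Rightarrow> real)) list"
  assumes eig: "\<And>\<mu> w i. (\<mu>, w) \<in> set es \<Longrightarrow> i < n \<Longrightarrow> path_lap n w i = \<mu> * w i"
    and expansion: "\<And>j. j < n \<Longrightarrow> std_basis a j - std_basis b j = (\<Sum>(\<mu>, w)\<leftarrow>es. of_real (w j))"
    and transfer: "\<And>i. i < n \<Longrightarrow> (\<Sum>(\<mu>, w)\<leftarrow>es. exp (\<i> * of_real (t * \<mu>)) * of_real (w i))
                                  = \<gamma> * (std_basis c i - std_basis d i)"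
    and "0 \<le> t" "cmod \<gamma> = 1"
  shows "pair_PST n path_adj a b c d"
proof -
  let ?U = "transition n path_adj t"
  have "mat_vec n ?U (\<lambda>j. \<Sum>(\<mu>, w)\<leftarrow>xs. of_real (w j)) i
          = (\<Sum>(\<mu>, w)\<leftarrow>xs. exp (\<i> * of_real (t * \<mu>)) * of_real (w i))"
    if "set xs \<subseteq> set es" "i < n" for xs i
    using that(1)
  proof (induction xs)
    case Nil
    then show ?case by (simp add: mat_vec_def)
  next
    case (Cons x xs)
    obtain \<mu> w where x: "x = (\<mu>, w)" by (cases x)
    have "mat_vec n ?U (\<lambda>j. of_real (w j) + (\<Sum>(\<mu>, w)\<leftarrow>xs. of_real (w j))) i
            = mat_vec n ?U (\<lambda>j. of_real (w j)) i + mat_vec n ?U (\<lambda>j. \<Sum>(\<mu>, w)\<leftarrow>xs. of_real (w j)) i"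
      by (rule mat_vec_add)
    moreover have "path_lap n w i = \<mu> * w i" if "i < n" for i
      using eig[OF _ that, of \<mu> w] Cons.prems x by simp
    ultimately show ?case
      using Cons path_transition_real_eigvec[of n w \<mu> i t] \<open>i < n\<close> x by simp
  qed
  moreover have "mat_vec n ?U (\<lambda>v. std_basis a v - std_basis b v) i
                   = mat_vec n ?U (\<lambda>j. \<Sum>(\<mu>, w)\<leftarrow>es. of_real (w j)) i" for i
    by (rule mat_vec_cong) (rule expansion)
  ultimately show ?thesis
    unfolding pair_PST_def using transfer assms(4,5) by (intro exI[of _ t] exI[of _ \<gamma>]) simp
qed

lemma pair_PST_path3: "pair_PST 3 path_adj 0 1 1 2"
proof -
  define es :: "(real \<times> (nat \<Rightarrow> real)) list"
    where "es = [(1, (!) [1/2, 0, -1/2]), (3, (!) [1/2, -1, 1/2])]"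
  have "exp (\<i> * of_real (pi / 2 * 1)) = cis (pi / 2)" "exp (\<i> * of_real (pi / 2 * 3)) = cis (3 / 2 * pi)"
    unfolding cis_conv_exp by (simp_all add: mult.commute)
  then have phases: "exp (\<i> * of_real (pi / 2 * 1)) = \<i>" "exp (\<i> * of_real (pi / 2 * 3)) = - \<i>"
    using cos_3over2_pi sin_3over2_pi by (simp_all add: complex_eq_iff)
  show ?thesis
  proof (rule path_pair_PST_of_eigen_expansion[where es = es and t = "pi / 2" and \<gamma> = \<i>])
    show "(\<Sum>(\<mu>, w)\<leftarrow>es. exp (\<i> * of_real (pi / 2 * \<mu>)) * of_real (w i))
            = \<i> * (std_basis 1 i - std_basis 2 i)" if "i < 3" for i
      unfolding es_def list.map prod.case sum_list_simps phases
      using that by (auto simp: std_basis_def less_Suc_eq eval_nat_numeral)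
  qed (auto simp: es_def path_lap_def degree_path std_basis_def less_Suc_eq eval_nat_numeral)
qed

lemma pair_PST_path4: "pair_PST 4 path_adj 0 1 2 3"
proof -
  define t where "t = pi / sqrt 2"
  define E where "E = exp (\<i> * of_real (t * 2))"
  define es :: "(real \<times> (nat \<Rightarrow> real)) list"
    where "es = [(2, (!) [1/2, -1/2, -1/2, 1/2]),
                 (2 - sqrt 2, (!) [1/4, (sqrt 2 - 1) / 4, (1 - sqrt 2) / 4, -1/4]),
                 (2 + sqrt 2, (!) [1/4, (- 1 - sqrt 2) / 4, (1 + sqrt 2) / 4, -1/4])]"
  have "t * (2 - sqrt 2) = t * 2 - pi" "t * (2 + sqrt 2) = t * 2 + pi"
    by (simp_all add: t_def algebra_simps)
  then have phases: "exp (\<i> * of_real (t * (2 - sqrt 2))) = - E" "exp (\<i> * of_real (t * (2 + sqrt 2))) = - E"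
    by (simp_all add: E_def right_diff_distrib distrib_left exp_diff exp_add)
  show ?thesis
  proof (rule path_pair_PST_of_eigen_expansion[where es = es and t = t and \<gamma> = "- E"])
    show "(\<Sum>(\<mu>, w)\<leftarrow>es. exp (\<i> * of_real (t * \<mu>)) * of_real (w i))
            = - E * (std_basis 2 i - std_basis 3 i)" if "i < 4" for i
      unfolding es_def list.map prod.case sum_list_simps phases E_def[symmetric]
      using that by (auto simp: std_basis_def less_Suc_eq eval_nat_numeral field_simps)
  qed (auto simp: es_def t_def E_def path_lap_def degree_path std_basis_def less_Suc_eq eval_nat_numeral,
      simp_all add: field_simps)
qed

theorem mainTheorem6:
  fixes n :: nat
  assumes "n \<ge> 2"
  shows "(\<exists>a b c d. a < n \<and> b < n \<and> c < n \<and> d < n \<and> a \<noteq> b \<and> c \<noteq> d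
            \<and> {a, b} \<noteq> {c, d} \<and> (path_adj a b \<or> path_adj c d)
            \<and> pair_PST n path_adj a b c d)
         \<longleftrightarrow> n \<in> {3, 4}"
proof
  assume "\<exists>a b c d. a < n \<and> b < n \<and> c < n \<and> d < n \<and> a \<noteq> b \<and> c \<noteq> d
            \<and> {a, b} \<noteq> {c, d} \<and> (path_adj a b \<or> path_adj c d)
            \<and> pair_PST n path_adj a b c d"
  then show "n \<in> {3, 4}" using path_edge_pair_PST_imp_3_or_4[OF assms] by blast
next
  assume "n \<in> {3, 4}"
  then consider "n = 3" | "n = 4" by blast
  then show "\<exists>a b c d. a < n \<and> b < n \<and> c < n \<and> d < n \<and> a \<noteq> b \<and> c \<noteq> d
            \<and> {a, b} \<noteq> {c, d} \<and> (path_adj a b \<or> path_adj c d)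
            \<and> pair_PST n path_adj a b c d"
  proof cases
    case 1
    then show ?thesis using pair_PST_path3
      by (intro exI[of _ 0] exI[of _ 1] exI[of _ 1] exI[of _ 2]) (simp add: path_adj_def doubleton_eq_iff)
  next
    case 2
    then show ?thesis using pair_PST_path4
      by (intro exI[of _ 0] exI[of _ 1] exI[of _ 2] exI[of _ 3]) (simp add: path_adj_def doubleton_eq_iff)
  qed
qed

end
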